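(* Let $(X,\mu)$ be a measure space and $\mathcal{E}$ a finite collection of measurable sets with $0<\mu(R)<\infty$ for all $R\in\mathcal{E}$. For each $f\in L^1(X)$ there exists a sparse subfamily $\mathcal{S}\subseteq\mathcal{E}$ such that $$\mathcal{M}_\mathcal{E}f\le\mathcal{P}^{\frac12}_\mathcal{E}(\mathcal{M}_\mathcal{S}f)\quad\text{pointwise}.$$
   Context: $\langle f\rangle_R=\frac1{\mu(R)}\int_Rf\,d\mu$. For a family $\mathcal{F}$ of such sets, $\mathcal{M}_\mathcal{F}f=\sup_{R\in\mathcal{F}}|\langle f\rangle_R|\mathbf{1}_R$. $\mathsf{P}^r_R(g):=\inf\{\lambda\in\mathbb{R}:\mu(\{x\in R:g(x)>\lambda\})\le r\mu(R)\}$ and $\mathcal{P}^r_\mathcal{E}g:=\sup_{R\in\mathcal{E}}\mathsf{P}^r_R(g)\mathbf{1}_R$. A subfamily $\mathcal{S}$ is sparse if there exist pairwise disjoint sets $E_R\subseteq R$, $R\in\mathcal{S}$, with $\mu(E_R)\ge\frac12\mu(R)$. *)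

theory Defs
  imports "HOL-Analysis.Analysis"
begin

definition avg :: "'a measure \<Rightarrow> ('a \<Rightarrow> real) \<Rightarrow> 'a set \<Rightarrow> real" where
  "avg M f R = (1 / measure M R) * (LINT x:R|M. f x)"

definition fsup :: "'b set \<Rightarrow> ('b \<Rightarrow> real) \<Rightarrow> real" where
  "fsup F h = (if F = {} then 0 else (SUP R\<in>F. h R))"

definition maxop :: "'a measure \<Rightarrow> 'a set set \<Rightarrow> ('a \<Rightarrow> real) \<Rightarrow> 'a \<Rightarrow> real" where
  "maxop M F f x = fsup F (\<lambda>R. \<bar>avg M f R\<bar> * indicator R x)"

definition Pquant :: "'a measure \<Rightarrow> real \<Rightarrow> 'a set \<Rightarrow> ('a \<Rightarrow> real) \<Rightarrow> real" where
  "Pquant M r R g = Inf {l::real. measure M {x\<in>R. g x > l} \<le> r * measure M R}"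

definition Pop :: "'a measure \<Rightarrow> real \<Rightarrow> 'a set set \<Rightarrow> ('a \<Rightarrow> real) \<Rightarrow> 'a \<Rightarrow> real" where
  "Pop M r E g x = fsup E (\<lambda>R. Pquant M r R g * indicator R x)"

definition sparse :: "'a measure \<Rightarrow> 'a set set \<Rightarrow> bool" where
  "sparse M S \<longleftrightarrow> (\<exists>ER. disjoint_family_on ER S \<and>
      (\<forall>R\<in>S. ER R \<in> sets M \<and> ER R \<subseteq> R \<and> measure M (ER R) \<ge> measure M R / 2))"

end

theory Submission
  imports Defs
begin

text \<open>
  Go through the sets of E in order of decreasing absolute average \<open>|<f>_R|\<close> and keep R
  whenever at most half of it is covered by the sets kept so far; the uncovered part of R
  then serves as its witness \<open>E_R\<close>, so the kept family S is sparse. Every R, kept or not,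
  has more than half of its measure in \<open>{M_S f \<ge> |<f>_R|}\<close>: a kept R lies there entirely,
  and more than half of a rejected R is covered by kept sets with larger averages. Hence the
  1/2-quantile of \<open>M_S f\<close> on R is at least \<open>|<f>_R|\<close>. Since only the numbers \<open>|<f>_R|\<close>
  matter, the argument works for arbitrary nonnegative weights and never uses that f is
  integrable.
\<close>

lemma fsup_upper:
  assumes "finite F" "R \<in> F"
  shows "h R \<le> fsup F h"
  using assms by (auto simp: fsup_def intro: cSUP_upper)

lemma fsup_least:
  assumes "\<And>R. R \<in> F \<Longrightarrow> h R \<le> c" "0 \<le> c"
  shows "fsup F h \<le> c"
  using assms by (auto simp: fsup_def intro: cSUP_least)

lemma fsup_mono:
  assumes "finite F" "\<And>R. R \<in> F \<Longrightarrow> g R \<le> h R"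
  shows "fsup F g \<le> fsup F h"
  using assms by (auto simp: fsup_def intro!: cSUP_mono)

lemma fsup_nonneg:
  assumes "finite F" "\<And>R. R \<in> F \<Longrightarrow> 0 \<le> h R"
  shows "0 \<le> fsup F h"
proof (cases "F = {}")
  case False
  then obtain R where "R \<in> F" by blast
  then show ?thesis using assms fsup_upper[OF \<open>finite F\<close>, of R h] by force
qed (simp add: fsup_def)

lemma fsup_subset_mono:
  assumes "finite F'" "F \<subseteq> F'" "\<And>R. R \<in> F' \<Longrightarrow> 0 \<le> h R"
  shows "fsup F h \<le> fsup F' h"
proof (cases "F = {}")
  case True
  then show ?thesis using fsup_nonneg[OF assms(1,3)] by (simp add: fsup_def)
next
  case False
  then show ?thesis using assms by (auto simp: fsup_def intro!: cSUP_subset_mono)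
qed

lemma borel_measurable_fsup:
  assumes "finite F" "\<And>R. R \<in> F \<Longrightarrow> h R \<in> borel_measurable M"
  shows "(\<lambda>x. fsup F (\<lambda>R. h R x)) \<in> borel_measurable M"
  using assms unfolding fsup_def
  by (auto intro!: borel_measurable_cSUP bdd_above_finite simp: countable_finite)

definition weighted_max :: "'b set set \<Rightarrow> ('b set \<Rightarrow> real) \<Rightarrow> 'b \<Rightarrow> real" where
  "weighted_max S a x = fsup S (\<lambda>Q. a Q * indicator Q x)"

lemma maxop_eq_weighted_max: "maxop M S f = weighted_max S (\<lambda>Q. \<bar>avg M f Q\<bar>)"
  by (simp add: fun_eq_iff maxop_def weighted_max_def)

lemma weighted_max_ge:
  assumes "finite S" "Q \<in> S" "x \<in> Q"
  shows "a Q \<le> weighted_max S a x"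
  using fsup_upper[OF assms(1,2), of "\<lambda>Q. a Q * indicator Q x"] assms(3)
  by (simp add: weighted_max_def)

lemma weighted_max_le_sum:
  assumes "finite S" "\<And>Q. Q \<in> S \<Longrightarrow> 0 \<le> a Q"
  shows "weighted_max S a x \<le> sum a S"
  unfolding weighted_max_def
proof (rule fsup_least)
  fix Q assume "Q \<in> S"
  then have "a Q * indicator Q x \<le> a Q"
    using assms(2) by (simp add: indicator_def)
  also have "\<dots> \<le> sum a S"
    using assms \<open>Q \<in> S\<close> by (intro member_le_sum) auto
  finally show "a Q * indicator Q x \<le> sum a S" .
qed (use assms in \<open>simp add: sum_nonneg\<close>)

lemma weighted_max_subset_mono:
  assumes "finite S'" "S \<subseteq> S'" "\<And>Q. Q \<in> S' \<Longrightarrow> 0 \<le> a Q"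
  shows "weighted_max S a x \<le> weighted_max S' a x"
  unfolding weighted_max_def using assms by (intro fsup_subset_mono) auto

lemma borel_measurable_weighted_max:
  assumes "finite S" "S \<subseteq> sets M"
  shows "weighted_max S a \<in> borel_measurable M"
  unfolding weighted_max_def[abs_def] using assms by (intro borel_measurable_fsup) auto

lemma sets_weighted_max_level:
  assumes "finite S" "S \<subseteq> sets M" "R \<in> sets M"
  shows "{x\<in>R. c \<le> weighted_max S a x} \<in> sets M"
  using borel_measurable_weighted_max[OF assms(1,2)] assms(3) by measurable

lemma sparse_empty: "sparse M {}"
  unfolding sparse_def disjoint_family_on_def by blast

lemma sparse_insert:
  assumes "sparse M S" "countable S" "S \<subseteq> sets M" "R \<in> fmeasurable M"
    and covered: "measure M (R \<inter> \<Union>S) \<le> measure M R / 2"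
  shows "sparse M (insert R S)"
proof (cases "R \<in> S")
  case True
  then show ?thesis using assms(1) by (simp add: insert_absorb)
next
  case False
  obtain ER where dis: "disjoint_family_on ER S"
    and ER: "\<And>Q. Q \<in> S \<Longrightarrow> ER Q \<in> sets M \<and> ER Q \<subseteq> Q \<and> measure M Q / 2 \<le> measure M (ER Q)"
    using assms(1) unfolding sparse_def by blast
  have US: "\<Union>S \<in> sets M"
    using assms(2,3) by (intro sets.countable_Union)
  have "measure M (R - \<Union>S) = measure M R - measure M (R \<inter> \<Union>S)"
    using measure_Diff[of M R "R \<inter> \<Union>S"] assms(4) US by (auto simp: Diff_Int fmeasurable_def)
  then have "measure M R / 2 \<le> measure M (R - \<Union>S)"
    using covered by simp
  moreover have "disjoint_family_on (ER(R := R - \<Union>S)) (insert R S)"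
    using dis ER False by (fastforce simp: disjoint_family_on_insert disjoint_family_on_def)
  ultimately show ?thesis
    unfolding sparse_def using ER False US assms(4)
    by (intro exI[of _ "ER(R := R - \<Union>S)"]) auto
qed

lemma le_Pquant:
  assumes R: "R \<in> fmeasurable M" and g: "g \<in> borel_measurable M"
    and bounded: "\<And>x. x \<in> R \<Longrightarrow> g x \<le> B" and "0 \<le> r"
    and majority: "r * measure M R < measure M {x\<in>R. c \<le> g x}"
  shows "c \<le> Pquant M r R g"
  unfolding Pquant_def
proof (rule cInf_greatest)
  have "{x\<in>R. B < g x} = {}"
    using bounded by force
  then have "measure M {x\<in>R. B < g x} \<le> r * measure M R"
    using \<open>0 \<le> r\<close> by (simp only: measure_empty mult_nonneg_nonneg measure_nonneg)
  then show "{l. measure M {x\<in>R. l < g x} \<le> r * measure M R} \<noteq> {}"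
    by blast
next
  fix l assume l: "l \<in> {l. measure M {x\<in>R. l < g x} \<le> r * measure M R}"
  show "c \<le> l"
  proof (rule ccontr)
    assume "\<not> c \<le> l"
    then have "{x\<in>R. c \<le> g x} \<subseteq> {x\<in>R. l < g x}"
      by auto
    moreover have "{x\<in>R. c \<le> g x} \<in> sets M" "{x\<in>R. l < g x} \<in> sets M"
      using R g by measurable
    ultimately have "measure M {x\<in>R. c \<le> g x} \<le> measure M {x\<in>R. l < g x}"
      using R by (intro measure_mono_fmeasurable fmeasurableI2[OF R]) auto
    then show False
      using l majority by simp
  qed
qed

lemma measure_weighted_max_level_mono:
  assumes "finite S'" "S \<subseteq> S'" "S' \<subseteq> sets M" "R \<in> fmeasurable M"
    and "\<And>Q. Q \<in> S' \<Longrightarrow> 0 \<le> a Q"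
  shows "measure M {x\<in>R. c \<le> weighted_max S a x} \<le> measure M {x\<in>R. c \<le> weighted_max S' a x}"
proof (rule measure_mono_fmeasurable)
  show "{x\<in>R. c \<le> weighted_max S a x} \<subseteq> {x\<in>R. c \<le> weighted_max S' a x}"
    using weighted_max_subset_mono[of S' S a] assms by (auto intro: order_trans)
  show "{x\<in>R. c \<le> weighted_max S a x} \<in> sets M"
    using assms by (intro sets_weighted_max_level) (auto intro: finite_subset)
  show "{x\<in>R. c \<le> weighted_max S' a x} \<in> fmeasurable M"
    using assms by (intro fmeasurableI2[OF \<open>R \<in> fmeasurable M\<close>] sets_weighted_max_level) auto
qed

lemma measure_covered_le_weighted_max_level:
  assumes "finite S" "S \<subseteq> sets M" "R \<in> fmeasurable M"
    and heavier: "\<And>Q. Q \<in> S \<Longrightarrow> a R \<le> a Q"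
  shows "measure M (R \<inter> \<Union>S) \<le> measure M {x\<in>R. a R \<le> weighted_max S a x}"
proof (rule measure_mono_fmeasurable)
  show "R \<inter> \<Union>S \<subseteq> {x\<in>R. a R \<le> weighted_max S a x}"
    using heavier weighted_max_ge[OF \<open>finite S\<close>] by (force intro: order_trans)
  show "R \<inter> \<Union>S \<in> sets M"
    using assms by (intro sets.Int sets.finite_Union) auto
  show "{x\<in>R. a R \<le> weighted_max S a x} \<in> fmeasurable M"
    using assms by (intro fmeasurableI2[OF \<open>R \<in> fmeasurable M\<close>] sets_weighted_max_level) auto
qed

lemma sparse_selection:
  assumes "finite E" "E \<subseteq> fmeasurable M"
    and "\<And>R. R \<in> E \<Longrightarrow> 0 < measure M R"
    and "\<And>R. R \<in> E \<Longrightarrow> 0 \<le> a R"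
  shows "\<exists>S\<subseteq>E. sparse M S \<and>
           (\<forall>R\<in>E. measure M R / 2 < measure M {x\<in>R. a R \<le> weighted_max S a x})"
  using assms
proof (induction E rule: finite_ranking_induct[where f = "\<lambda>R. - a R"])
  case empty
  then show ?case using sparse_empty by blast
next
  case (insert R E)
  \<comment> \<open>the ranking adds sets by decreasing weight, so R is the lightest one\<close>
  obtain S where "S \<subseteq> E" "sparse M S"
    and majority: "\<And>Q. Q \<in> E \<Longrightarrow> measure M Q / 2 < measure M {x\<in>Q. a Q \<le> weighted_max S a x}"
    using insert by auto
  have "finite S" "S \<subseteq> sets M" "R \<in> fmeasurable M"
    using insert.hyps(1) insert.prems(1) \<open>S \<subseteq> E\<close> by (auto intro: finite_subset)
  consider "measure M (R \<inter> \<Union>S) \<le> measure M R / 2" | "measure M R / 2 < measure M (R \<inter> \<Union>S)"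
    by linarith
  then show ?case
  proof cases
    case 1
    have "sparse M (insert R S)"
      using \<open>sparse M S\<close> \<open>finite S\<close> \<open>S \<subseteq> sets M\<close> \<open>R \<in> fmeasurable M\<close> 1
      by (intro sparse_insert) (auto intro: countable_finite)
    moreover have "{x\<in>R. a R \<le> weighted_max (insert R S) a x} = R"
      using weighted_max_ge[where S="insert R S" and Q=R and a=a] \<open>finite S\<close> by auto
    moreover have "measure M Q / 2 < measure M {x\<in>Q. a Q \<le> weighted_max (insert R S) a x}"
      if "Q \<in> E" for Q
    proof -
      have "measure M {x\<in>Q. a Q \<le> weighted_max S a x}
          \<le> measure M {x\<in>Q. a Q \<le> weighted_max (insert R S) a x}"
        using \<open>finite S\<close> \<open>S \<subseteq> sets M\<close> \<open>R \<in> fmeasurable M\<close> \<open>S \<subseteq> E\<close> that insert.prems(1,3)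
        by (intro measure_weighted_max_level_mono) auto
      then show ?thesis
        using majority[OF that] by linarith
    qed
    ultimately show ?thesis
      using \<open>S \<subseteq> E\<close> insert.prems(2) by (intro exI[of _ "insert R S"]) auto
  next
    case 2
    have "measure M (R \<inter> \<Union>S) \<le> measure M {x\<in>R. a R \<le> weighted_max S a x}"
      using insert.hyps(2) \<open>S \<subseteq> E\<close> \<open>finite S\<close> \<open>S \<subseteq> sets M\<close> \<open>R \<in> fmeasurable M\<close>
      by (intro measure_covered_le_weighted_max_level) force+
    then show ?thesis
      using 2 \<open>S \<subseteq> E\<close> \<open>sparse M S\<close> majority by (intro exI[of _ S]) auto
  qed
qed

theorem theorem1p5:
  fixes M :: "'a measure" and E :: "'a set set" and f :: "'a \<Rightarrow> real"
  assumes "finite E"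
    and "\<And>R. R \<in> E \<Longrightarrow> R \<in> sets M"
    and "\<And>R. R \<in> E \<Longrightarrow> 0 < emeasure M R \<and> emeasure M R < \<infinity>"
    and "integrable M f"
  shows "\<exists>S. S \<subseteq> E \<and> sparse M S \<and>
           (\<forall>x\<in>space M. maxop M E f x \<le> Pop M (1/2) E (maxop M S f) x)"
proof -
  have fmeas: "E \<subseteq> fmeasurable M"
    using assms(2,3) by (auto intro: fmeasurableI)
  have pos: "0 < measure M R" if "R \<in> E" for R
    using assms(3)[OF that] by (auto simp: measure_def enn2real_positive_iff)
  obtain S where "S \<subseteq> E" "sparse M S"
    and majority: "\<And>R. R \<in> E \<Longrightarrow>
      measure M R / 2 < measure M {x\<in>R. \<bar>avg M f R\<bar> \<le> maxop M S f x}"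
    using sparse_selection[OF assms(1) fmeas pos, of "\<lambda>R. \<bar>avg M f R\<bar>"]
    unfolding maxop_eq_weighted_max by auto
  have "finite S" "S \<subseteq> sets M"
    using \<open>S \<subseteq> E\<close> assms(1,2) by (auto intro: finite_subset)
  then have g: "maxop M S f \<in> borel_measurable M"
    and bounded: "\<And>x. maxop M S f x \<le> (\<Sum>Q\<in>S. \<bar>avg M f Q\<bar>)"
    unfolding maxop_eq_weighted_max by (auto intro: borel_measurable_weighted_max weighted_max_le_sum)
  have "\<bar>avg M f R\<bar> \<le> Pquant M (1/2) R (maxop M S f)" if "R \<in> E" for R
    using that fmeas majority[OF that] by (intro le_Pquant[OF _ g bounded]) auto
  then have "maxop M E f x \<le> Pop M (1/2) E (maxop M S f) x" for x
    unfolding maxop_def Pop_def using assms(1) by (intro fsup_mono) (auto simp: indicator_def)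
  then show ?thesis
    using \<open>S \<subseteq> E\<close> \<open>sparse M S\<close> by blast
qed

end
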